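(* Let $\Omega\subset\mathbb C^n$ be a domain and $\eta\ge0$ a measurable function on $\Omega$ such that $\int_\Omega\phi^2\eta\le\int_\Omega|\nabla\phi|^2$ for all $\phi\in C_0^\infty(\Omega)$. Then $$\int_\Omega|\omega|^2\eta\le 4\int_\Omega|\bar\partial\omega|^2+4\int_\Omega|\bar\partial^*\omega|^2$$ for every smooth compactly supported $(0,1)$-form $\omega$ on $\Omega$.
   Context: Here $\mathbb C^n$ is identified with $\mathbb R^{2n}$ and $\nabla$ is the real gradient. For $\omega=\sum_j\omega_j\,d\bar z_j$, $|\omega|^2=\sum_j|\omega_j|^2$, $\bar\partial\omega$ is the $(0,2)$-form given by the Cauchy–Riemann operator, and $\bar\partial^*\omega=-\sum_j\partial\omega_j/\partial z_j$ is the formal adjoint of $\bar\partial$ with respect to the unweighted Euclidean $L^2$ inner product. *)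

theory Defs
  imports "HOL-Analysis.Analysis"
begin

fun Ck_on :: "nat \<Rightarrow> ('a::euclidean_space \<Rightarrow> 'b::real_normed_vector) \<Rightarrow> 'a set \<Rightarrow> bool" where
  "Ck_on 0 f S = continuous_on S f"
| "Ck_on (Suc k) f S = (f differentiable_on S \<and>
      (\<forall>v. Ck_on k (\<lambda>x. frechet_derivative f (at x) v) S))"

definition smooth_on :: "('a::euclidean_space \<Rightarrow> 'b::real_normed_vector) \<Rightarrow> 'a set \<Rightarrow> bool" where
  "smooth_on f S = (\<forall>k. Ck_on k f S)"

definition test_function :: "'a::euclidean_space set \<Rightarrow> ('a \<Rightarrow> 'b::real_normed_vector) \<Rightarrow> bool" where
  "test_function \<Omega> f = (smooth_on f UNIV \<and> compact (closure {x. f x \<noteq> 0})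
      \<and> closure {x. f x \<noteq> 0} \<subseteq> \<Omega>)"

text \<open>Partial derivatives w.r.t. x_j and y_j, where z_j = x_j + i y_j.\<close>
definition dx :: "(complex^'n \<Rightarrow> 'b::real_normed_vector) \<Rightarrow> 'n \<Rightarrow> complex^'n \<Rightarrow> 'b" where
  "dx f j z = frechet_derivative f (at z) (axis j 1)"

definition dy :: "(complex^'n \<Rightarrow> 'b::real_normed_vector) \<Rightarrow> 'n \<Rightarrow> complex^'n \<Rightarrow> 'b" where
  "dy f j z = frechet_derivative f (at z) (axis j \<i>)"

definition dzbar :: "(complex^'n \<Rightarrow> complex) \<Rightarrow> 'n \<Rightarrow> complex^'n \<Rightarrow> complex" where
  "dzbar f j z = (dx f j z + \<i> * dy f j z) / 2"

definition dz :: "(complex^'n \<Rightarrow> complex) \<Rightarrow> 'n \<Rightarrow> complex^'n \<Rightarrow> complex" where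
  "dz f j z = (dx f j z - \<i> * dy f j z) / 2"

definition grad_sq :: "(complex^'n \<Rightarrow> real) \<Rightarrow> complex^'n \<Rightarrow> real" where
  "grad_sq \<phi> z = (\<Sum>j\<in>UNIV. (dx \<phi> j z)\<^sup>2 + (dy \<phi> j z)\<^sup>2)"

text \<open>A (0,1)-form omega = sum_j omega_j d(zbar_j) is given by its coefficient functions.\<close>
definition form_sq :: "('n \<Rightarrow> complex^'n \<Rightarrow> complex) \<Rightarrow> complex^'n \<Rightarrow> real" where
  "form_sq \<omega> z = (\<Sum>j\<in>UNIV. (cmod (\<omega> j z))\<^sup>2)"

text \<open>|dbar omega|^2 = sum_{j<k} |d omega_k/d zbar_j - d omega_j/d zbar_k|^2,
  written as half the sum over all ordered pairs (the summand is symmetric and vanishes on the diagonal).\<close>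
definition dbar_sq :: "('n \<Rightarrow> complex^'n \<Rightarrow> complex) \<Rightarrow> complex^'n \<Rightarrow> real" where
  "dbar_sq \<omega> z = (1/2) * (\<Sum>j\<in>UNIV. \<Sum>k\<in>UNIV.
      (cmod (dzbar (\<omega> k) j z - dzbar (\<omega> j) k z))\<^sup>2)"

text \<open>dbar^* omega = - sum_j d omega_j / d z_j (unweighted formal adjoint).\<close>
definition dbar_star :: "('n \<Rightarrow> complex^'n \<Rightarrow> complex) \<Rightarrow> complex^'n \<Rightarrow> complex" where
  "dbar_star \<omega> z = - (\<Sum>j\<in>UNIV. dz (\<omega> j) j z)"

end

theory Submission
  imports Defs
begin

text \<open>Apply the hypothesis to the real and imaginary parts of every coefficient \<open>\<omega> j\<close>.
  It then suffices that the sum of their Dirichlet integrals equals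
  4 (int |dbar omega|^2 + int |dbar^* omega|^2). Pointwise,
  |grad Re f|^2 + |grad Im f|^2 = 2 sum_k (|df/dz_k|^2 + |df/dzbar_k|^2), and two integrations by
  parts finish the argument: int |df/dz_k|^2 = int |df/dzbar_k|^2, and the Morrey-Kohn-Hormander
  identity sum_{j,k} int |d omega_j/dzbar_k|^2 = int |dbar omega|^2 + int |dbar^* omega|^2.
  Both are instances of int (df/dzbar_j) conj(dg/dzbar_k) = int (df/dz_k) conj(dg/dz_j): the
  difference of the two integrands is a complex combination of Jacobians D_u f D_v h - D_v f D_u h
  with h = conj g, and by the symmetry of second derivatives each of these is a derivative
  D_u (f D_v h) - D_v (f D_u h) of a compactly supported function, hence integrates to zero.\<close>

section \<open>Directional derivatives of smooth maps\<close>

definition dir_deriv :: "('a::euclidean_space \<Rightarrow> 'b::real_normed_vector) \<Rightarrow> 'a \<Rightarrow> 'a \<Rightarrow> 'b" where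
  "dir_deriv f u x = frechet_derivative f (at x) u"

lemma dir_deriv_eqI: "(f has_derivative f') (at x) \<Longrightarrow> dir_deriv f u x = f' u"
  unfolding dir_deriv_def by (metis frechet_derivative_at)

lemma has_derivative_dir_deriv:
  "f differentiable at x \<Longrightarrow> (f has_derivative (\<lambda>u. dir_deriv f u x)) (at x)"
  unfolding dir_deriv_def by (simp add: frechet_derivative_works[symmetric])

lemma smooth_on_dir_deriv: "smooth_on f UNIV \<Longrightarrow> smooth_on (dir_deriv f u) UNIV"
  unfolding smooth_on_def dir_deriv_def[abs_def] by (metis Ck_on.simps(2))

lemma smooth_on_imp_continuous_on: "smooth_on f UNIV \<Longrightarrow> continuous_on UNIV f"
  unfolding smooth_on_def by (metis Ck_on.simps(1))

lemma smooth_on_imp_differentiable: "smooth_on f UNIV \<Longrightarrow> f differentiable at x"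
  unfolding smooth_on_def by (metis Ck_on.simps(2) UNIV_I differentiable_on_def)

lemma Ck_on_compose_bounded_linear:
  assumes "bounded_linear L" and "Ck_on k f UNIV"
  shows "Ck_on k (\<lambda>x. L (f x)) UNIV"
  using assms(2)
proof (induction k arbitrary: f)
  case 0
  then show ?case using bounded_linear.continuous_on[OF assms(1)] by simp
next
  case (Suc k)
  then have "f differentiable at x" for x
    by (simp add: differentiable_on_def)
  then have L_has_derivative:
    "((\<lambda>x. L (f x)) has_derivative (\<lambda>u. L (dir_deriv f u x))) (at x)" for x
    by (intro bounded_linear.has_derivative[OF assms(1)] has_derivative_dir_deriv)
  have "(\<lambda>x. frechet_derivative (\<lambda>x. L (f x)) (at x) v)
      = (\<lambda>x. L (frechet_derivative f (at x) v))" for v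
    using dir_deriv_eqI[OF L_has_derivative] by (simp add: dir_deriv_def)
  moreover have "Ck_on k (\<lambda>x. L (frechet_derivative f (at x) v)) UNIV" for v
  proof (rule Suc.IH)
    show "Ck_on k (\<lambda>x. frechet_derivative f (at x) v) UNIV"
      using Suc.prems by simp
  qed
  moreover have "(\<lambda>x. L (f x)) differentiable_on UNIV"
    using L_has_derivative by (auto simp: differentiable_on_def differentiable_def)
  ultimately show ?case by simp
qed

lemma smooth_on_compose_bounded_linear:
  "bounded_linear L \<Longrightarrow> smooth_on f UNIV \<Longrightarrow> smooth_on (\<lambda>x. L (f x)) UNIV"
  unfolding smooth_on_def using Ck_on_compose_bounded_linear by blast

lemma dir_deriv_compose_bounded_linear:
  "bounded_linear L \<Longrightarrow> f differentiable at x \<Longrightarrow> dir_deriv (\<lambda>x. L (f x)) u x = L (dir_deriv f u x)"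
  by (rule dir_deriv_eqI[OF bounded_linear.has_derivative[OF _ has_derivative_dir_deriv]])

lemma dir_deriv_eq_0_outside:
  assumes "closed K" and "\<And>y. y \<notin> K \<Longrightarrow> f y = 0" and "x \<notin> K"
  shows "dir_deriv f u x = 0"
proof -
  have "(f has_derivative (\<lambda>h. 0)) (at x)"
  proof (rule has_derivative_transform_within_open)
    show "((\<lambda>y. 0) has_derivative (\<lambda>h. 0)) (at x)"
      by (rule has_derivative_const)
    show "open (- K)" "x \<in> - K"
      using assms(1,3) by auto
    show "\<And>y. y \<in> - K \<Longrightarrow> 0 = f y"
      using assms(2) by simp
  qed
  from dir_deriv_eqI[OF this] show ?thesis .
qed

lemma has_vector_derivative_along_line:
  assumes "f differentiable at (y + t *\<^sub>R u)"
  shows "((\<lambda>t. f (y + t *\<^sub>R u)) has_vector_derivative dir_deriv f u (y + t *\<^sub>R u)) (at t within S)"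
proof -
  let ?p = "y + t *\<^sub>R u"
  have f': "(f has_derivative (\<lambda>v. dir_deriv f v ?p)) (at ?p)"
    by (rule has_derivative_dir_deriv[OF assms])
  have line: "((\<lambda>t. y + t *\<^sub>R u) has_derivative (\<lambda>h. h *\<^sub>R u)) (at t within S)"
    by (intro derivative_eq_intros) auto
  have "((\<lambda>t. f (y + t *\<^sub>R u)) has_derivative (\<lambda>h. dir_deriv f (h *\<^sub>R u) ?p)) (at t within S)"
    using has_derivative_compose[OF line f'] .
  moreover have "(\<lambda>h. dir_deriv f (h *\<^sub>R u) ?p) = (\<lambda>h. h *\<^sub>R dir_deriv f u ?p)"
    by (intro ext linear_scale[OF has_derivative_linear[OF f']])
  ultimately show ?thesis
    unfolding has_vector_derivative_def by simp
qed

section \<open>Symmetry of second derivatives\<close>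

lemma mean_value_along_line:
  fixes f :: "'a::euclidean_space \<Rightarrow> real"
  assumes "\<And>x. f differentiable at x" and "0 < s"
  obtains t where "0 < t" "t < s" "f (y + s *\<^sub>R u) - f y = s * dir_deriv f u (y + t *\<^sub>R u)"
proof -
  have "((\<lambda>t. f (y + t *\<^sub>R u)) has_real_derivative dir_deriv f u (y + t *\<^sub>R u)) (at t)" for t
    unfolding has_real_derivative_iff_has_vector_derivative
    by (rule has_vector_derivative_along_line[OF assms(1)])
  from MVT2[OF assms(2) this] show ?thesis
    using that by auto
qed

lemma second_difference_mean_value:
  fixes g :: "'a::euclidean_space \<Rightarrow> real"
  assumes g: "smooth_on g UNIV" and s: "0 < s"
  obtains y where "norm (y - x) \<le> s * (norm u + norm v)"
    "g (x + s *\<^sub>R u + s *\<^sub>R v) - g (x + s *\<^sub>R u) - g (x + s *\<^sub>R v) + g x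
       = s * s * dir_deriv (dir_deriv g u) v y"
proof -
  define F where "F z = g (z + s *\<^sub>R v) - g z" for z
  have dg: "(g has_derivative (\<lambda>w. dir_deriv g w z)) (at z)" for z
    by (rule has_derivative_dir_deriv[OF smooth_on_imp_differentiable[OF g]])
  have dF: "(F has_derivative (\<lambda>w. dir_deriv g w (z + s *\<^sub>R v) - dir_deriv g w z)) (at z)" for z
  proof -
    have "((\<lambda>z. z + s *\<^sub>R v) has_derivative (\<lambda>w. w)) (at z)"
      by (rule has_derivative_add_const[OF has_derivative_ident])
    then show ?thesis
      unfolding F_def by (rule has_derivative_diff[OF has_derivative_compose[OF _ dg] dg])
  qed
  obtain \<xi> where \<xi>: "0 < \<xi>" "\<xi> < s" and
    F_mvt: "F (x + s *\<^sub>R u) - F x = s * dir_deriv F u (x + \<xi> *\<^sub>R u)"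
    by (rule mean_value_along_line[OF differentiableI[OF dF] s])
  obtain \<eta> where \<eta>: "0 < \<eta>" "\<eta> < s" and
    Dg_mvt: "dir_deriv g u (x + \<xi> *\<^sub>R u + s *\<^sub>R v) - dir_deriv g u (x + \<xi> *\<^sub>R u)
      = s * dir_deriv (dir_deriv g u) v (x + \<xi> *\<^sub>R u + \<eta> *\<^sub>R v)"
    by (rule mean_value_along_line[OF smooth_on_imp_differentiable[OF smooth_on_dir_deriv[OF g]] s])
  have "g (x + s *\<^sub>R u + s *\<^sub>R v) - g (x + s *\<^sub>R u) - g (x + s *\<^sub>R v) + g x = F (x + s *\<^sub>R u) - F x"
    unfolding F_def by simp
  also have "\<dots> = s * (dir_deriv g u (x + \<xi> *\<^sub>R u + s *\<^sub>R v) - dir_deriv g u (x + \<xi> *\<^sub>R u))"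
    unfolding F_mvt dir_deriv_eqI[OF dF] ..
  also have "\<dots> = s * s * dir_deriv (dir_deriv g u) v (x + \<xi> *\<^sub>R u + \<eta> *\<^sub>R v)"
    unfolding Dg_mvt by simp
  finally have "g (x + s *\<^sub>R u + s *\<^sub>R v) - g (x + s *\<^sub>R u) - g (x + s *\<^sub>R v) + g x
      = s * s * dir_deriv (dir_deriv g u) v (x + \<xi> *\<^sub>R u + \<eta> *\<^sub>R v)" .
  moreover have "norm (\<xi> *\<^sub>R u + \<eta> *\<^sub>R v) \<le> \<xi> * norm u + \<eta> * norm v"
    using norm_triangle_ineq[of "\<xi> *\<^sub>R u" "\<eta> *\<^sub>R v"] \<xi> \<eta> by simp
  moreover have "\<dots> \<le> s * norm u + s * norm v"
    using \<xi> \<eta> by (intro add_mono mult_right_mono) auto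
  ultimately show ?thesis
    using that[of "x + \<xi> *\<^sub>R u + \<eta> *\<^sub>R v"] by (simp add: distrib_left add.assoc)
qed

lemma second_difference_quotient_tendsto:
  fixes g :: "'a::euclidean_space \<Rightarrow> real"
  assumes g: "smooth_on g UNIV"
  shows "((\<lambda>s. (g (x + s *\<^sub>R u + s *\<^sub>R v) - g (x + s *\<^sub>R u) - g (x + s *\<^sub>R v) + g x) / (s * s))
    \<longlongrightarrow> dir_deriv (dir_deriv g u) v x) (at_right 0)"
proof -
  let ?D = "dir_deriv (dir_deriv g u) v"
  let ?Q = "\<lambda>s. (g (x + s *\<^sub>R u + s *\<^sub>R v) - g (x + s *\<^sub>R u) - g (x + s *\<^sub>R v) + g x) / (s * s)"
  have near_point: "\<exists>y. norm (y - x) \<le> s * (norm u + norm v) \<and> ?Q s = ?D y" if s: "0 < s" for s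
  proof -
    obtain y where "norm (y - x) \<le> s * (norm u + norm v)"
      and "g (x + s *\<^sub>R u + s *\<^sub>R v) - g (x + s *\<^sub>R u) - g (x + s *\<^sub>R v) + g x = s * s * ?D y"
      by (rule second_difference_mean_value[OF g s])
    then show ?thesis
      using s by auto
  qed
  define Y where "Y s = (SOME y. norm (y - x) \<le> s * (norm u + norm v) \<and> ?Q s = ?D y)" for s
  have Y: "norm (Y s - x) \<le> s * (norm u + norm v) \<and> ?Q s = ?D (Y s)" if "0 < s" for s
    unfolding Y_def by (rule someI_ex[OF near_point[OF that]])
  have Y_tendsto: "((\<lambda>s. Y s - x) \<longlongrightarrow> 0) (at_right 0)"
  proof (rule Lim_null_comparison)
    show "\<forall>\<^sub>F s in at_right 0. norm (Y s - x) \<le> s * (norm u + norm v)"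
      using eventually_at_right_less by (rule eventually_mono) (use Y in blast)
    show "((\<lambda>s. s * (norm u + norm v)) \<longlongrightarrow> 0) (at_right 0)"
      by (intro tendsto_mult_left_zero tendsto_ident_at)
  qed
  have D_cont: "isCont ?D x"
    using smooth_on_imp_continuous_on[OF smooth_on_dir_deriv[OF smooth_on_dir_deriv[OF g]]]
    by (simp add: continuous_on_eq_continuous_at)
  have "((\<lambda>s. ?D (Y s)) \<longlongrightarrow> ?D x) (at_right 0)"
    by (rule isCont_tendsto_compose[OF D_cont LIM_zero_cancel[OF Y_tendsto]])
  moreover have "\<forall>\<^sub>F s in at_right 0. ?D (Y s) = ?Q s"
    using eventually_at_right_less by (rule eventually_mono) (metis Y)
  ultimately show ?thesis
    by (rule Lim_transform_eventually)
qed

lemma dir_deriv_commute_real: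
  fixes g :: "'a::euclidean_space \<Rightarrow> real"
  assumes "smooth_on g UNIV"
  shows "dir_deriv (dir_deriv g u) v x = dir_deriv (dir_deriv g v) u x"
proof (rule tendsto_unique[OF trivial_limit_at_right_real])
  show "((\<lambda>s. (g (x + s *\<^sub>R u + s *\<^sub>R v) - g (x + s *\<^sub>R u) - g (x + s *\<^sub>R v) + g x) / (s * s))
    \<longlongrightarrow> dir_deriv (dir_deriv g u) v x) (at_right 0)"
    by (rule second_difference_quotient_tendsto[OF assms])
  show "((\<lambda>s. (g (x + s *\<^sub>R u + s *\<^sub>R v) - g (x + s *\<^sub>R u) - g (x + s *\<^sub>R v) + g x) / (s * s))
    \<longlongrightarrow> dir_deriv (dir_deriv g v) u x) (at_right 0)"
    using second_difference_quotient_tendsto[OF assms, of x v u] by (simp add: algebra_simps)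
qed

lemma dir_deriv_commute:
  fixes g :: "'a::euclidean_space \<Rightarrow> 'b::euclidean_space"
  assumes g: "smooth_on g UNIV"
  shows "dir_deriv (dir_deriv g u) v x = dir_deriv (dir_deriv g v) u x"
proof (rule euclidean_eqI)
  fix b :: 'b
  have inner_b: "dir_deriv (\<lambda>x. h x \<bullet> b) w x = dir_deriv h w x \<bullet> b"
    if "smooth_on h UNIV" for h :: "'a \<Rightarrow> 'b" and w x
    by (rule dir_deriv_compose_bounded_linear[OF bounded_linear_inner_left
          smooth_on_imp_differentiable[OF that]])
  have second: "dir_deriv (dir_deriv (\<lambda>x. g x \<bullet> b) w) w' x = dir_deriv (dir_deriv g w) w' x \<bullet> b"
    for w w'
  proof -
    have "dir_deriv (\<lambda>x. g x \<bullet> b) w = (\<lambda>x. dir_deriv g w x \<bullet> b)"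
      using inner_b[OF g] by (rule ext)
    then show ?thesis
      using inner_b[OF smooth_on_dir_deriv[OF g]] by simp
  qed
  show "dir_deriv (dir_deriv g u) v x \<bullet> b = dir_deriv (dir_deriv g v) u x \<bullet> b"
    using dir_deriv_commute_real[OF smooth_on_compose_bounded_linear[OF bounded_linear_inner_left g]]
    by (simp add: second[symmetric])
qed

section \<open>Integration by parts for compactly supported functions\<close>

lemma integrable_on_UNIV_if_compact_support:
  fixes f :: "'a::euclidean_space \<Rightarrow> 'b::banach"
  assumes "continuous_on UNIV f" and "compact K" and "\<And>x. x \<notin> K \<Longrightarrow> f x = 0"
  shows "f integrable_on UNIV"
proof -
  obtain c where c: "K \<subseteq> cbox (-c) c"
    using assms(2) compact_imp_bounded bounded_subset_cbox_symmetric by metis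
  have "f integrable_on cbox (-c) c"
    using assms(1) by (auto intro: integrable_continuous continuous_on_subset)
  then have "(f has_integral integral (cbox (-c) c) f) UNIV"
    by (rule has_integral_on_superset[OF integrable_integral]) (use c assms(3) in auto)
  then show ?thesis
    by blast
qed

lemma integral_cbox_translate:
  fixes H :: "'a::euclidean_space \<Rightarrow> 'b::banach"
  assumes H: "continuous_on UNIV H" and H0: "\<And>y. y \<notin> K \<Longrightarrow> H y = 0"
    and K: "K \<subseteq> cbox a b" and Kw: "(\<lambda>k. k - w) ` K \<subseteq> cbox a b"
  shows "integral (cbox a b) (\<lambda>y. H (y + w)) = integral (cbox a b) H"
proof -
  have "H integrable_on cbox a b"
    using H by (auto intro: integrable_continuous continuous_on_subset)
  then have "(H has_integral integral (cbox a b) H) UNIV"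
    by (rule has_integral_on_superset[OF integrable_integral]) (use H0 K in auto)
  moreover have H0': "H y = 0" if "y \<notin> cbox (a + w) (b + w)" for y
  proof (rule H0)
    show "y \<notin> K"
    proof
      assume "y \<in> K"
      then have "y - w \<in> cbox a b"
        using Kw by blast
      then show False
        using that by (auto simp: mem_box algebra_simps)
    qed
  qed
  ultimately have "((\<lambda>y. if y \<in> cbox (a + w) (b + w) then H y else 0)
      has_integral integral (cbox a b) H) UNIV"
    by (elim has_integral_eq[rotated]) auto
  then have "(H has_integral integral (cbox a b) H) (cbox (a + w) (b + w))"
    by (simp add: has_integral_restrict_UNIV)
  then have "((H \<circ> (+) w) has_integral integral (cbox a b) H) (cbox a b)"
    by (simp add: has_integral_shift_cbox_iff)
  then show ?thesis
    by (simp add: o_def add.commute integral_unique)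
qed

lemma integral_cbox_dir_deriv_eq_0:
  fixes F :: "'a::euclidean_space \<Rightarrow> 'b::euclidean_space"
  assumes dF: "\<And>x. F differentiable at x" and cont: "continuous_on UNIV (dir_deriv F u)"
    and K: "closed K" and F0: "\<And>x. x \<notin> K \<Longrightarrow> F x = 0"
    and shifted_K: "\<And>t. t \<in> {0..1} \<Longrightarrow> (\<lambda>k. k - t *\<^sub>R u) ` K \<subseteq> cbox a b"
  shows "integral (cbox a b) (dir_deriv F u) = 0"
proof -
  let ?G = "dir_deriv F u" and ?B = "cbox a b"
  have G0: "?G x = 0" if "x \<notin> K" for x
    using dir_deriv_eq_0_outside[OF K F0 that] .
  have K_B: "K \<subseteq> ?B"
    using shifted_K[of 0] by simp
  have cF: "continuous_on UNIV F"
    using dF by (simp add: differentiable_imp_continuous_on differentiable_on_def)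
  txt \<open>Integrating \<open>?G\<close> along the segments from \<open>y\<close> to \<open>y + u\<close> yields \<open>F (y + u) - F y\<close>,
    whose integral vanishes by translation invariance; swapping the two integrations
    yields the integral of \<open>?G\<close>.\<close>
  have ftc: "((\<lambda>t. ?G (y + t *\<^sub>R u)) has_integral (F (y + u) - F y)) {0..1}" for y
    using fundamental_theorem_of_calculus[of 0 1 "\<lambda>t. F (y + t *\<^sub>R u)"]
      has_vector_derivative_along_line[OF dF] by simp
  have "integral ?B (\<lambda>y. integral {0..1} (\<lambda>t. ?G (y + t *\<^sub>R u))) = integral ?B (\<lambda>y. F (y + u) - F y)"
    using ftc by (intro integral_cong) (simp add: integral_unique)
  also have "\<dots> = integral ?B (\<lambda>y. F (y + u)) - integral ?B F"
    by (intro integral_diff integrable_continuous continuous_on_subset[OF cF]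
        continuous_on_compose2[OF cF] continuous_intros) auto
  also have "\<dots> = 0"
    using integral_cbox_translate[OF cF F0 K_B shifted_K[of 1]] by simp
  finally have double_integral: "integral ?B (\<lambda>y. integral {0..1} (\<lambda>t. ?G (y + t *\<^sub>R u))) = 0" .
  have "continuous_on (cbox (a, 0) (b, 1)) (\<lambda>(y, t). ?G (y + t *\<^sub>R u))"
  proof -
    have "continuous_on UNIV (\<lambda>p :: 'a \<times> real. ?G (fst p + snd p *\<^sub>R u))"
      by (rule continuous_on_compose2[OF cont]) (auto intro!: continuous_intros)
    then show ?thesis
      unfolding case_prod_unfold by (rule continuous_on_subset) simp
  qed
  note swap = integral_swap_continuous[OF this, unfolded box_real]
  have "integral {0..1} (\<lambda>t. integral ?B (\<lambda>y. ?G (y + t *\<^sub>R u)))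
      = integral {0..1::real} (\<lambda>t. integral ?B ?G)"
    by (rule integral_cong) (use integral_cbox_translate[OF cont G0 K_B shifted_K] in simp)
  then show ?thesis
    using swap double_integral by simp
qed

lemma has_integral_dir_deriv_eq_0:
  fixes F :: "'a::euclidean_space \<Rightarrow> 'b::euclidean_space"
  assumes dF: "\<And>x. F differentiable at x" and cont: "continuous_on UNIV (dir_deriv F u)"
    and K: "compact K" and F0: "\<And>x. x \<notin> K \<Longrightarrow> F x = 0"
  shows "(dir_deriv F u has_integral 0) UNIV"
proof -
  have "compact ((\<lambda>(k, t). k - t *\<^sub>R u) ` (K \<times> {0..1}))"
    by (intro compact_continuous_image compact_Times K compact_Icc)
      (auto intro!: continuous_intros simp: case_prod_unfold)
  then obtain c where c: "(\<lambda>(k, t). k - t *\<^sub>R u) ` (K \<times> {0..1}) \<subseteq> cbox (-c) c"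
    using compact_imp_bounded bounded_subset_cbox_symmetric by metis
  have shifted_K: "(\<lambda>k. k - t *\<^sub>R u) ` K \<subseteq> cbox (-c) c" if "t \<in> {0..1}" for t
    using c that by (auto simp: image_subset_iff)
  have "integral (cbox (-c) c) (dir_deriv F u) = 0"
    by (rule integral_cbox_dir_deriv_eq_0[OF dF cont compact_imp_closed[OF K] F0 shifted_K])
  moreover have "dir_deriv F u integrable_on cbox (-c) c"
    using cont by (auto intro: integrable_continuous continuous_on_subset)
  ultimately have "(dir_deriv F u has_integral 0) (cbox (-c) c)"
    by (metis has_integral_integral)
  moreover have "dir_deriv F u x = 0" if "x \<notin> cbox (-c) c" for x
  proof (rule dir_deriv_eq_0_outside[OF compact_imp_closed[OF K] F0])
    show "x \<notin> K"
      using shifted_K[of 0] that by auto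
  qed
  ultimately show ?thesis
    by (rule has_integral_on_superset) auto
qed

lemma has_integral_dir_deriv_product_eq_0:
  fixes f h :: "'a::euclidean_space \<Rightarrow> 'b::{euclidean_space, real_normed_algebra}"
  assumes f: "smooth_on f UNIV" and h: "smooth_on h UNIV"
    and K: "compact K" and f0: "\<And>x. x \<notin> K \<Longrightarrow> f x = 0"
  shows "((\<lambda>x. dir_deriv f u x * h x + f x * dir_deriv h u x) has_integral 0) UNIV"
proof -
  have product_rule:
    "((\<lambda>x. f x * h x) has_derivative (\<lambda>w. f x * dir_deriv h w x + dir_deriv f w x * h x)) (at x)" for x
    by (intro has_derivative_mult has_derivative_dir_deriv smooth_on_imp_differentiable f h)
  have D_eq: "dir_deriv (\<lambda>x. f x * h x) u = (\<lambda>x. dir_deriv f u x * h x + f x * dir_deriv h u x)"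
    using dir_deriv_eqI[OF product_rule] by (simp add: fun_eq_iff add.commute)
  have "continuous_on UNIV (\<lambda>x. dir_deriv f u x * h x + f x * dir_deriv h u x)"
    by (intro continuous_intros smooth_on_imp_continuous_on smooth_on_dir_deriv f h)
  then have "(dir_deriv (\<lambda>x. f x * h x) u has_integral 0) UNIV"
    unfolding D_eq[symmetric]
    by (rule has_integral_dir_deriv_eq_0[OF differentiableI[OF product_rule] _ K]) (simp add: f0)
  then show ?thesis
    unfolding D_eq .
qed

lemma has_integral_jacobian_eq_0:
  fixes f g :: "'a::euclidean_space \<Rightarrow> 'b::{euclidean_space, real_normed_algebra}"
  assumes f: "smooth_on f UNIV" and g: "smooth_on g UNIV"
    and K: "compact K" and f0: "\<And>x. x \<notin> K \<Longrightarrow> f x = 0"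
  shows "((\<lambda>x. dir_deriv f u x * dir_deriv g v x - dir_deriv f v x * dir_deriv g u x)
    has_integral 0) UNIV"
proof -
  have "((\<lambda>x. (dir_deriv f u x * dir_deriv g v x + f x * dir_deriv (dir_deriv g v) u x)
      - (dir_deriv f v x * dir_deriv g u x + f x * dir_deriv (dir_deriv g u) v x))
      has_integral 0 - 0) UNIV"
    by (intro has_integral_diff
        has_integral_dir_deriv_product_eq_0[OF f smooth_on_dir_deriv[OF g] K f0])
  then show ?thesis
    by (simp add: dir_deriv_commute[OF g, of u v])
qed

section \<open>Wirtinger derivatives\<close>

lemma dx_eq_dir_deriv: "dx f j = dir_deriv f (axis j 1)"
  by (simp add: fun_eq_iff dx_def dir_deriv_def)

lemma dy_eq_dir_deriv: "dy f j = dir_deriv f (axis j \<i>)"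
  by (simp add: fun_eq_iff dy_def dir_deriv_def)

lemma continuous_on_dzbar: "smooth_on f UNIV \<Longrightarrow> continuous_on UNIV (dzbar f j)"
  unfolding dzbar_def[abs_def] dx_eq_dir_deriv dy_eq_dir_deriv
  by (intro continuous_intros smooth_on_imp_continuous_on smooth_on_dir_deriv) auto

lemma continuous_on_dz: "smooth_on f UNIV \<Longrightarrow> continuous_on UNIV (dz f j)"
  unfolding dz_def[abs_def] dx_eq_dir_deriv dy_eq_dir_deriv
  by (intro continuous_intros smooth_on_imp_continuous_on smooth_on_dir_deriv) auto

lemma continuous_on_grad_sq: "smooth_on \<phi> UNIV \<Longrightarrow> continuous_on UNIV (grad_sq \<phi>)"
  unfolding grad_sq_def[abs_def] dx_eq_dir_deriv dy_eq_dir_deriv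
  by (intro continuous_intros smooth_on_imp_continuous_on smooth_on_dir_deriv)

lemma
  assumes "closed K" and "\<And>y. y \<notin> K \<Longrightarrow> f y = 0" and "z \<notin> K"
  shows dzbar_eq_0_outside: "dzbar f j z = 0"
    and dz_eq_0_outside: "dz f j z = 0"
  using dir_deriv_eq_0_outside[OF assms]
  by (simp_all add: dzbar_def dz_def dx_eq_dir_deriv dy_eq_dir_deriv)

lemma grad_sq_eq_0_outside:
  assumes "closed K" and "\<And>y. y \<notin> K \<Longrightarrow> \<phi> y = 0" and "z \<notin> K"
  shows "grad_sq \<phi> z = 0"
  using dir_deriv_eq_0_outside[OF assms]
  by (simp add: grad_sq_def dx_eq_dir_deriv dy_eq_dir_deriv)

lemma grad_sq_nonneg: "0 \<le> grad_sq \<phi> z"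
  by (simp add: grad_sq_def sum_nonneg)

lemma dbar_sq_nonneg: "0 \<le> dbar_sq \<omega> z"
  by (simp add: dbar_sq_def sum_nonneg)

lemma continuous_on_dbar_sq: "(\<And>j. smooth_on (\<omega> j) UNIV) \<Longrightarrow> continuous_on UNIV (dbar_sq \<omega>)"
  unfolding dbar_sq_def[abs_def] by (intro continuous_intros continuous_on_dzbar)

lemma continuous_on_norm_dbar_star_sq:
  "(\<And>j. smooth_on (\<omega> j) UNIV) \<Longrightarrow> continuous_on UNIV (\<lambda>z. (cmod (dbar_star \<omega> z))\<^sup>2)"
  unfolding dbar_star_def by (intro continuous_intros continuous_on_dz)

lemma
  assumes "closed K" and "\<And>j y. y \<notin> K \<Longrightarrow> \<omega> j y = 0" and "z \<notin> K"
  shows dbar_sq_eq_0_outside: "dbar_sq \<omega> z = 0"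
    and dbar_star_eq_0_outside: "dbar_star \<omega> z = 0"
  using dzbar_eq_0_outside[OF assms] dz_eq_0_outside[OF assms]
  by (simp_all add: dbar_sq_def dbar_star_def)

lemma has_integral_dzbar_mult_cnj_dzbar:
  fixes f g :: "complex^'n \<Rightarrow> complex"
  assumes f: "smooth_on f UNIV" and g: "smooth_on g UNIV"
    and K: "compact K" and f0: "\<And>x. x \<notin> K \<Longrightarrow> f x = 0"
  shows "((\<lambda>z. dzbar f j z * cnj (dzbar g k z) - dz f k z * cnj (dz g j z)) has_integral 0) UNIV"
proof -
  define h where "h z = cnj (g z)" for z
  have h: "smooth_on h UNIV"
    unfolding h_def by (rule smooth_on_compose_bounded_linear[OF bounded_linear_cnj g])
  have Dh: "dir_deriv h w z = cnj (dir_deriv g w z)" for w z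
    unfolding h_def
    by (rule dir_deriv_compose_bounded_linear[OF bounded_linear_cnj
          smooth_on_imp_differentiable[OF g]])
  define W where
    "W a b = (\<lambda>z. dir_deriv f a z * dir_deriv h b z - dir_deriv f b z * dir_deriv h a z)" for a b
  have W0: "(W a b has_integral 0) UNIV" for a b
    unfolding W_def by (rule has_integral_jacobian_eq_0[OF f h K f0])
  have "(\<lambda>z. dzbar f j z * cnj (dzbar g k z) - dz f k z * cnj (dz g j z))
    = (\<lambda>z. (W (axis j 1) (axis k 1) z - \<i> * W (axis j 1) (axis k \<i>) z
          + \<i> * W (axis j \<i>) (axis k 1) z + W (axis j \<i>) (axis k \<i>) z) / 4)"
    by (simp add: fun_eq_iff W_def Dh dzbar_def dz_def dx_eq_dir_deriv dy_eq_dir_deriv field_simps)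
  moreover have "((\<lambda>z. (W (axis j 1) (axis k 1) z - \<i> * W (axis j 1) (axis k \<i>) z
          + \<i> * W (axis j \<i>) (axis k 1) z + W (axis j \<i>) (axis k \<i>) z) / 4)
      has_integral (0 - \<i> * 0 + \<i> * 0 + 0) / 4) UNIV"
    by (intro has_integral_divide has_integral_add has_integral_diff has_integral_mult_right W0)
  ultimately show ?thesis
    by simp
qed

lemma has_integral_norm_dzbar_sq_eq_norm_dz_sq:
  fixes f :: "complex^'n \<Rightarrow> complex"
  assumes "smooth_on f UNIV" and "compact K" and "\<And>x. x \<notin> K \<Longrightarrow> f x = 0"
  shows "((\<lambda>z. (cmod (dzbar f j z))\<^sup>2 - (cmod (dz f j z))\<^sup>2) has_integral 0) UNIV"
  using has_integral_Re[OF has_integral_dzbar_mult_cnj_dzbar[OF assms(1,1-3), of j j]]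
  by (simp flip: complex_norm_square)

section \<open>The energy identity\<close>

lemma cmod_diff_power2: "(cmod (a - b))\<^sup>2 = (cmod a)\<^sup>2 + (cmod b)\<^sup>2 - 2 * Re (a * cnj b)"
  by (simp add: cmod_power2 power2_diff algebra_simps)

lemma cmod_sum_power2: "(cmod (\<Sum>j\<in>A. d j))\<^sup>2 = (\<Sum>j\<in>A. \<Sum>k\<in>A. Re (d j * cnj (d k)))"
proof -
  have "complex_of_real ((cmod (\<Sum>j\<in>A. d j))\<^sup>2) = (\<Sum>j\<in>A. \<Sum>k\<in>A. d j * cnj (d k))"
    by (simp only: complex_norm_square cnj_sum sum_product)
  from arg_cong[where f=Re, OF this] show ?thesis
    by (simp add: Re_sum)
qed

lemma dbar_sq_plus_norm_dbar_star_sq: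
  "dbar_sq \<omega> z + (cmod (dbar_star \<omega> z))\<^sup>2
    = (\<Sum>k\<in>UNIV. \<Sum>j\<in>UNIV. (cmod (dzbar (\<omega> k) j z))\<^sup>2)
      - (\<Sum>j\<in>UNIV. \<Sum>k\<in>UNIV.
          Re (dzbar (\<omega> k) j z * cnj (dzbar (\<omega> j) k z) - dz (\<omega> k) k z * cnj (dz (\<omega> j) j z)))"
proof -
  define c where "c j k = dzbar (\<omega> k) j z" for j k
  define d where "d j = dz (\<omega> j) j z" for j
  define n where "n j k = (cmod (c j k))\<^sup>2" for j k
  define r where "r j k = Re (c j k * cnj (c k j))" for j k
  have "dbar_sq \<omega> z = (1/2) * (\<Sum>j\<in>UNIV. \<Sum>k\<in>UNIV. n j k + n k j - 2 * r j k)"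
    by (simp add: dbar_sq_def c_def n_def r_def cmod_diff_power2)
  also have "\<dots> = (1/2) * ((\<Sum>j\<in>UNIV. \<Sum>k\<in>UNIV. n j k) + (\<Sum>j\<in>UNIV. \<Sum>k\<in>UNIV. n k j)
      - 2 * (\<Sum>j\<in>UNIV. \<Sum>k\<in>UNIV. r j k))"
    by (simp only: sum.distrib sum_subtractf sum_distrib_left)
  also have "\<dots> = (\<Sum>j\<in>UNIV. \<Sum>k\<in>UNIV. n j k) - (\<Sum>j\<in>UNIV. \<Sum>k\<in>UNIV. r j k)"
    using sum.swap[of "\<lambda>j k. n k j" UNIV UNIV] by simp
  finally have "dbar_sq \<omega> z = (\<Sum>k\<in>UNIV. \<Sum>j\<in>UNIV. n j k) - (\<Sum>j\<in>UNIV. \<Sum>k\<in>UNIV. r j k)"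
    by (simp add: sum.swap[of n UNIV UNIV])
  moreover have "(cmod (dbar_star \<omega> z))\<^sup>2 = (\<Sum>j\<in>UNIV. \<Sum>k\<in>UNIV. Re (d k * cnj (d j)))"
    using sum.swap[of "\<lambda>j k. Re (d j * cnj (d k))" UNIV UNIV]
    by (simp add: dbar_star_def d_def cmod_sum_power2)
  ultimately show ?thesis
    by (simp add: c_def d_def n_def r_def sum_subtractf)
qed

lemma grad_sq_Re_plus_grad_sq_Im:
  assumes "f differentiable at z"
  shows "grad_sq (\<lambda>x. Re (f x)) z + grad_sq (\<lambda>x. Im (f x)) z
    = 2 * (\<Sum>j\<in>UNIV. (cmod (dz f j z))\<^sup>2 + (cmod (dzbar f j z))\<^sup>2)"
proof -
  have D_Re: "dir_deriv (\<lambda>x. Re (f x)) w z = Re (dir_deriv f w z)" for w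
    by (rule dir_deriv_compose_bounded_linear[OF bounded_linear_Re assms])
  have D_Im: "dir_deriv (\<lambda>x. Im (f x)) w z = Im (dir_deriv f w z)" for w
    by (rule dir_deriv_compose_bounded_linear[OF bounded_linear_Im assms])
  have parallelogram: "(Re a)\<^sup>2 + (Re b)\<^sup>2 + ((Im a)\<^sup>2 + (Im b)\<^sup>2)
      = 2 * ((cmod ((a - \<i> * b) / 2))\<^sup>2 + (cmod ((a + \<i> * b) / 2))\<^sup>2)" for a b
    unfolding norm_divide power_divide cmod_power2
    by (simp add: power2_sum power2_diff add_divide_distrib diff_divide_distrib)
  show ?thesis
    unfolding grad_sq_def dz_def dzbar_def dx_eq_dir_deriv dy_eq_dir_deriv D_Re D_Im
    by (simp add: parallelogram sum.distrib[symmetric] sum_distrib_left)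
qed

lemma integrable_on_sum_norm_dzbar_sq:
  assumes "smooth_on f UNIV" and "compact K" and "\<And>x. x \<notin> K \<Longrightarrow> f x = 0"
  shows "(\<lambda>z. \<Sum>j\<in>UNIV. (cmod (dzbar f j z))\<^sup>2) integrable_on UNIV"
  by (rule integrable_on_UNIV_if_compact_support[OF _ assms(2)])
    (auto intro!: continuous_intros continuous_on_dzbar assms(1)
      simp: dzbar_eq_0_outside[OF compact_imp_closed[OF assms(2)] assms(3)])

lemma has_integral_grad_sq_Re_Im:
  fixes f :: "complex^'n \<Rightarrow> complex"
  assumes f: "smooth_on f UNIV" and K: "compact K" and f0: "\<And>x. x \<notin> K \<Longrightarrow> f x = 0"
  shows "((\<lambda>z. grad_sq (\<lambda>x. Re (f x)) z + grad_sq (\<lambda>x. Im (f x)) z)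
    has_integral 4 * integral UNIV (\<lambda>z. \<Sum>j\<in>UNIV. (cmod (dzbar f j z))\<^sup>2)) UNIV"
proof -
  let ?N = "\<lambda>z. \<Sum>j\<in>UNIV. (cmod (dzbar f j z))\<^sup>2"
  let ?E = "\<lambda>z. \<Sum>j\<in>UNIV. (cmod (dzbar f j z))\<^sup>2 - (cmod (dz f j z))\<^sup>2"
  have "?N integrable_on UNIV"
    by (rule integrable_on_sum_norm_dzbar_sq[OF f K f0])
  moreover have "(?E has_integral 0) UNIV"
    using has_integral_sum[of UNIV "\<lambda>j z. (cmod (dzbar f j z))\<^sup>2 - (cmod (dz f j z))\<^sup>2" "\<lambda>j. 0"]
      has_integral_norm_dzbar_sq_eq_norm_dz_sq[OF f K f0] by simp
  ultimately have "((\<lambda>z. 4 * ?N z - 2 * ?E z) has_integral 4 * integral UNIV ?N - 2 * 0) UNIV"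
    by (intro has_integral_diff has_integral_mult_right integrable_integral)
  moreover have "grad_sq (\<lambda>x. Re (f x)) z + grad_sq (\<lambda>x. Im (f x)) z = 4 * ?N z - 2 * ?E z" for z
    unfolding grad_sq_Re_plus_grad_sq_Im[OF smooth_on_imp_differentiable[OF f]]
    by (simp add: sum.distrib sum_subtractf sum_distrib_left)
  ultimately show ?thesis
    by simp
qed

lemma has_integral_sum_norm_dzbar_sq:
  fixes \<omega> :: "'n \<Rightarrow> complex^'n \<Rightarrow> complex"
  assumes K: "compact K" and smooth: "\<And>j. smooth_on (\<omega> j) UNIV"
    and \<omega>0: "\<And>j x. x \<notin> K \<Longrightarrow> \<omega> j x = 0"
  shows "((\<lambda>z. \<Sum>k\<in>UNIV. \<Sum>j\<in>UNIV. (cmod (dzbar (\<omega> k) j z))\<^sup>2)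
    has_integral integral UNIV (dbar_sq \<omega>) + integral UNIV (\<lambda>z. (cmod (dbar_star \<omega> z))\<^sup>2)) UNIV"
proof -
  let ?E = "\<lambda>z. \<Sum>j\<in>UNIV. \<Sum>k\<in>UNIV.
    Re (dzbar (\<omega> k) j z * cnj (dzbar (\<omega> j) k z) - dz (\<omega> k) k z * cnj (dz (\<omega> j) j z))"
  have closed: "closed K"
    using K by (rule compact_imp_closed)
  have "dbar_sq \<omega> integrable_on UNIV"
    by (rule integrable_on_UNIV_if_compact_support[OF continuous_on_dbar_sq[OF smooth] K
          dbar_sq_eq_0_outside[OF closed \<omega>0]])
  moreover have "(\<lambda>z. (cmod (dbar_star \<omega> z))\<^sup>2) integrable_on UNIV"
    by (rule integrable_on_UNIV_if_compact_support[OF continuous_on_norm_dbar_star_sq[OF smooth] K])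
      (simp add: dbar_star_eq_0_outside[OF closed \<omega>0])
  moreover have "(?E has_integral 0) UNIV"
    using has_integral_sum[OF finite_class.finite_UNIV has_integral_sum[OF finite_class.finite_UNIV
        has_integral_Re[OF has_integral_dzbar_mult_cnj_dzbar[OF smooth smooth K \<omega>0]]]]
    by simp
  ultimately have "((\<lambda>z. dbar_sq \<omega> z + (cmod (dbar_star \<omega> z))\<^sup>2 + ?E z)
      has_integral integral UNIV (dbar_sq \<omega>) + integral UNIV (\<lambda>z. (cmod (dbar_star \<omega> z))\<^sup>2) + 0) UNIV"
    by (intro has_integral_add integrable_integral)
  then show ?thesis
    by (simp add: dbar_sq_plus_norm_dbar_star_sq)
qed

lemma has_integral_sum_grad_sq_Re_Im:
  fixes \<omega> :: "'n \<Rightarrow> complex^'n \<Rightarrow> complex"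
  assumes K: "compact K" and smooth: "\<And>j. smooth_on (\<omega> j) UNIV"
    and \<omega>0: "\<And>j x. x \<notin> K \<Longrightarrow> \<omega> j x = 0"
  shows "((\<lambda>z. \<Sum>k\<in>UNIV. grad_sq (\<lambda>x. Re (\<omega> k x)) z + grad_sq (\<lambda>x. Im (\<omega> k x)) z)
    has_integral 4 * (integral UNIV (dbar_sq \<omega>) + integral UNIV (\<lambda>z. (cmod (dbar_star \<omega> z))\<^sup>2))) UNIV"
proof -
  let ?N = "\<lambda>k z. \<Sum>j\<in>UNIV. (cmod (dzbar (\<omega> k) j z))\<^sup>2"
  have "((\<lambda>z. \<Sum>k\<in>UNIV. grad_sq (\<lambda>x. Re (\<omega> k x)) z + grad_sq (\<lambda>x. Im (\<omega> k x)) z)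
      has_integral (\<Sum>k\<in>UNIV. 4 * integral UNIV (?N k))) UNIV"
    by (intro has_integral_sum finite_class.finite_UNIV
        has_integral_grad_sq_Re_Im[OF smooth K \<omega>0])
  moreover have "(\<Sum>k\<in>UNIV. integral UNIV (?N k)) = integral UNIV (\<lambda>z. \<Sum>k\<in>UNIV. ?N k z)"
    by (rule integral_sum[symmetric])
      (auto intro: integrable_on_sum_norm_dzbar_sq[OF smooth K \<omega>0])
  ultimately show ?thesis
    using integral_unique[OF has_integral_sum_norm_dzbar_sq[OF K smooth \<omega>0]]
    by (simp add: sum_distrib_left[symmetric])
qed

lemma nn_integral_lebesgue_on_eq_integral:
  fixes h :: "'a::euclidean_space \<Rightarrow> real"
  assumes \<Omega>: "\<Omega> \<in> sets lebesgue" and K: "compact K" "K \<subseteq> \<Omega>"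
    and h: "continuous_on UNIV h" "\<And>x. 0 \<le> h x" "\<And>x. x \<notin> K \<Longrightarrow> h x = 0"
  shows "(\<integral>\<^sup>+x. ennreal (h x) \<partial>lebesgue_on \<Omega>) = ennreal (integral UNIV h)"
proof -
  have "(\<integral>\<^sup>+x. ennreal (h x) \<partial>lebesgue_on \<Omega>) = (\<integral>\<^sup>+x. ennreal (h x) * indicator \<Omega> x \<partial>lebesgue)"
    using \<Omega> by (simp add: nn_integral_restrict_space)
  also have "\<dots> = (\<integral>\<^sup>+x\<in>UNIV. ennreal (h x) \<partial>lborel)"
  proof -
    have "h x = 0" if "x \<notin> \<Omega>" for x
      using h(3) K(2) that by blast
    then show ?thesis
      unfolding nn_integral_completion by (intro nn_integral_cong) (auto simp: indicator_def)
  qed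
  also have "\<dots> = ennreal (integral UNIV h)"
    using h(2) integrable_integral[OF integrable_on_UNIV_if_compact_support[OF h(1) K(1) h(3)]]
    by (rule nn_integral_has_integral_lebesgue')
  finally show ?thesis .
qed

lemma nn_integral_form_sq_mult:
  fixes \<omega> :: "'n \<Rightarrow> complex^'n \<Rightarrow> complex"
  assumes \<omega>: "\<And>k. \<omega> k \<in> borel_measurable M"
    and \<eta>: "\<eta> \<in> borel_measurable M" "\<And>z. z \<in> space M \<Longrightarrow> 0 \<le> \<eta> z"
  shows "(\<integral>\<^sup>+z. ennreal (form_sq \<omega> z * \<eta> z) \<partial>M)
    = (\<Sum>k\<in>UNIV. (\<integral>\<^sup>+z. ennreal ((Re (\<omega> k z))\<^sup>2 * \<eta> z) \<partial>M) + (\<integral>\<^sup>+z. ennreal ((Im (\<omega> k z))\<^sup>2 * \<eta> z) \<partial>M))"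
proof -
  have "(\<integral>\<^sup>+z. ennreal (form_sq \<omega> z * \<eta> z) \<partial>M)
      = (\<integral>\<^sup>+z. (\<Sum>k\<in>UNIV. ennreal ((Re (\<omega> k z))\<^sup>2 * \<eta> z) + ennreal ((Im (\<omega> k z))\<^sup>2 * \<eta> z)) \<partial>M)"
  proof (rule nn_integral_cong)
    fix z assume "z \<in> space M"
    then have "0 \<le> \<eta> z"
      by (rule \<eta>(2))
    then show "ennreal (form_sq \<omega> z * \<eta> z)
        = (\<Sum>k\<in>UNIV. ennreal ((Re (\<omega> k z))\<^sup>2 * \<eta> z) + ennreal ((Im (\<omega> k z))\<^sup>2 * \<eta> z))"
      by (simp add: form_sq_def cmod_power2 sum_distrib_right distrib_right ennreal_plus
          sum_ennreal[symmetric])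
  qed
  also have "\<dots> = (\<Sum>k\<in>UNIV. (\<integral>\<^sup>+z. ennreal ((Re (\<omega> k z))\<^sup>2 * \<eta> z) \<partial>M)
      + (\<integral>\<^sup>+z. ennreal ((Im (\<omega> k z))\<^sup>2 * \<eta> z) \<partial>M))"
    using \<omega> \<eta>(1) by (simp add: nn_integral_sum nn_integral_add)
  finally show ?thesis .
qed

lemma test_function_compose_bounded_linear:
  assumes L: "bounded_linear L" and f: "test_function \<Omega> f"
  shows "test_function \<Omega> (\<lambda>x. L (f x))"
proof -
  let ?S = "closure {x. f x \<noteq> 0}" and ?T = "closure {x. L (f x) \<noteq> 0}"
  have "?T \<subseteq> ?S"
    using linear_0[OF bounded_linear.linear[OF L]] by (intro closure_mono) auto
  moreover have "compact ?S" "?S \<subseteq> \<Omega>" "smooth_on f UNIV"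
    using f by (auto simp: test_function_def)
  moreover have "compact (?S \<inter> ?T)"
    using \<open>compact ?S\<close> by (rule compact_Int_closed) simp
  ultimately show ?thesis
    unfolding test_function_def using smooth_on_compose_bounded_linear[OF L]
    by (auto simp: Int_absorb1)
qed

lemma test_functions_common_support:
  fixes f :: "'i::finite \<Rightarrow> 'a::euclidean_space \<Rightarrow> 'b::real_normed_vector"
  assumes "\<And>i. test_function \<Omega> (f i)"
  obtains K where "compact K" "K \<subseteq> \<Omega>" "\<And>i x. x \<notin> K \<Longrightarrow> f i x = 0"
proof -
  let ?K = "\<Union>i. closure {x. f i x \<noteq> 0}"
  have "compact (closure {x. f i x \<noteq> 0})" "closure {x. f i x \<noteq> 0} \<subseteq> \<Omega>" for i
    using assms[of i] by (simp_all add: test_function_def)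
  then have "compact ?K" "?K \<subseteq> \<Omega>"
    by (auto intro: compact_UN)
  moreover have "f i x = 0" if "x \<notin> ?K" for i x
  proof (rule ccontr)
    assume "f i x \<noteq> 0"
    then have "x \<in> closure {x. f i x \<noteq> 0}"
      by (intro subsetD[OF closure_subset]) simp
    with that show False
      by blast
  qed
  ultimately show ?thesis
    by (rule that)
qed

lemma nn_integral_sum_grad_sq_Re_Im:
  fixes \<omega> :: "'n \<Rightarrow> complex^'n \<Rightarrow> complex"
  assumes \<Omega>: "\<Omega> \<in> sets lebesgue" and K: "compact K" "K \<subseteq> \<Omega>"
    and smooth: "\<And>j. smooth_on (\<omega> j) UNIV" and \<omega>0: "\<And>j x. x \<notin> K \<Longrightarrow> \<omega> j x = 0"
  shows "(\<Sum>k\<in>UNIV. (\<integral>\<^sup>+z. ennreal (grad_sq (\<lambda>x. Re (\<omega> k x)) z) \<partial>lebesgue_on \<Omega>)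
                   + (\<integral>\<^sup>+z. ennreal (grad_sq (\<lambda>x. Im (\<omega> k x)) z) \<partial>lebesgue_on \<Omega>))
    = 4 * (\<integral>\<^sup>+z. ennreal (dbar_sq \<omega> z) \<partial>lebesgue_on \<Omega>)
      + 4 * (\<integral>\<^sup>+z. ennreal ((cmod (dbar_star \<omega> z))\<^sup>2) \<partial>lebesgue_on \<Omega>)"
proof -
  have closed: "closed K"
    using K(1) by (rule compact_imp_closed)
  have to_integral: "(\<integral>\<^sup>+x. ennreal (h x) \<partial>lebesgue_on \<Omega>) = ennreal (integral UNIV h)"
    "h integrable_on UNIV" "0 \<le> integral UNIV h"
    if "continuous_on UNIV h" "\<And>x. 0 \<le> h x" "\<And>x. x \<notin> K \<Longrightarrow> h x = 0" for h
    using nn_integral_lebesgue_on_eq_integral[OF \<Omega> K that]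
      integrable_on_UNIV_if_compact_support[OF that(1) K(1) that(3)]
    by (auto intro: integral_nonneg that(2))
  have "smooth_on (\<lambda>x. Re (\<omega> k x)) UNIV" "smooth_on (\<lambda>x. Im (\<omega> k x)) UNIV" for k
    by (intro smooth_on_compose_bounded_linear[OF _ smooth] bounded_linear_Re bounded_linear_Im)+
  note Re_Im = this[THEN continuous_on_grad_sq]
  note R = to_integral[OF Re_Im(1) grad_sq_nonneg grad_sq_eq_0_outside[OF closed]]
    and I = to_integral[OF Re_Im(2) grad_sq_nonneg grad_sq_eq_0_outside[OF closed]]
  note D = to_integral[OF continuous_on_dbar_sq[OF smooth] dbar_sq_nonneg
      dbar_sq_eq_0_outside[OF closed \<omega>0]]
  have S: "(\<integral>\<^sup>+z. ennreal ((cmod (dbar_star \<omega> z))\<^sup>2) \<partial>lebesgue_on \<Omega>)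
      = ennreal (integral UNIV (\<lambda>z. (cmod (dbar_star \<omega> z))\<^sup>2))"
    "0 \<le> integral UNIV (\<lambda>z. (cmod (dbar_star \<omega> z))\<^sup>2)"
    by (rule to_integral[OF continuous_on_norm_dbar_star_sq[OF smooth]];
        simp add: dbar_star_eq_0_outside[OF closed \<omega>0])+
  have "(\<Sum>k\<in>UNIV. (\<integral>\<^sup>+z. ennreal (grad_sq (\<lambda>x. Re (\<omega> k x)) z) \<partial>lebesgue_on \<Omega>)
                   + (\<integral>\<^sup>+z. ennreal (grad_sq (\<lambda>x. Im (\<omega> k x)) z) \<partial>lebesgue_on \<Omega>))
      = ennreal (\<Sum>k\<in>UNIV. integral UNIV (grad_sq (\<lambda>x. Re (\<omega> k x)))
          + integral UNIV (grad_sq (\<lambda>x. Im (\<omega> k x))))"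
    using R I by (simp add: \<omega>0 ennreal_plus sum_ennreal[symmetric] add_nonneg_nonneg)
  also have "\<dots> = ennreal (integral UNIV
      (\<lambda>z. \<Sum>k\<in>UNIV. grad_sq (\<lambda>x. Re (\<omega> k x)) z + grad_sq (\<lambda>x. Im (\<omega> k x)) z))"
    using R I by (simp add: \<omega>0 integral_sum integral_add integrable_add)
  also have "\<dots> = ennreal (4 * (integral UNIV (dbar_sq \<omega>)
      + integral UNIV (\<lambda>z. (cmod (dbar_star \<omega> z))\<^sup>2)))"
    by (simp add: integral_unique[OF has_integral_sum_grad_sq_Re_Im[OF K(1) smooth \<omega>0]])
  also have "\<dots> = 4 * (\<integral>\<^sup>+z. ennreal (dbar_sq \<omega> z) \<partial>lebesgue_on \<Omega>)
      + 4 * (\<integral>\<^sup>+z. ennreal ((cmod (dbar_star \<omega> z))\<^sup>2) \<partial>lebesgue_on \<Omega>)"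
    using D S by (simp add: ennreal_plus ennreal_mult)
  finally show ?thesis .
qed

theorem proposition2p1:
  fixes \<Omega> :: "(complex^'n) set" and \<eta> :: "complex^'n \<Rightarrow> real"
    and \<omega> :: "'n \<Rightarrow> complex^'n \<Rightarrow> complex"
  assumes "open \<Omega>" and "connected \<Omega>"
    and "\<eta> \<in> borel_measurable (lebesgue_on \<Omega>)"
    and "\<forall>z\<in>\<Omega>. 0 \<le> \<eta> z"
    and "\<forall>\<phi> :: complex^'n \<Rightarrow> real. test_function \<Omega> \<phi> \<longrightarrow>
          (\<integral>\<^sup>+ z. ennreal ((\<phi> z)\<^sup>2 * \<eta> z) \<partial>(lebesgue_on \<Omega>))
            \<le> (\<integral>\<^sup>+ z. ennreal (grad_sq \<phi> z) \<partial>(lebesgue_on \<Omega>))"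
    and "\<forall>j. test_function \<Omega> (\<omega> j)"
  shows "(\<integral>\<^sup>+ z. ennreal (form_sq \<omega> z * \<eta> z) \<partial>(lebesgue_on \<Omega>))
    \<le> 4 * (\<integral>\<^sup>+ z. ennreal (dbar_sq \<omega> z) \<partial>(lebesgue_on \<Omega>))
      + 4 * (\<integral>\<^sup>+ z. ennreal ((cmod (dbar_star \<omega> z))\<^sup>2) \<partial>(lebesgue_on \<Omega>))"
proof -
  note tf = assms(6)[rule_format]
  obtain K where K: "compact K" "K \<subseteq> \<Omega>" and \<omega>0: "\<And>j x. x \<notin> K \<Longrightarrow> \<omega> j x = 0"
    using test_functions_common_support[where f=\<omega>, OF tf] by metis
  have \<Omega>: "\<Omega> \<in> sets lebesgue"
    using assms(1) by simp
  have smooth: "\<And>j. smooth_on (\<omega> j) UNIV"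
    using tf by (simp add: test_function_def)
  have measurable: "\<And>j. \<omega> j \<in> borel_measurable (lebesgue_on \<Omega>)"
    using continuous_imp_measurable_on_sets_lebesgue[OF
        continuous_on_subset[OF smooth_on_imp_continuous_on[OF smooth] subset_UNIV] \<Omega>] .
  have "(\<integral>\<^sup>+ z. ennreal (form_sq \<omega> z * \<eta> z) \<partial>(lebesgue_on \<Omega>))
      = (\<Sum>k\<in>UNIV. (\<integral>\<^sup>+z. ennreal ((Re (\<omega> k z))\<^sup>2 * \<eta> z) \<partial>lebesgue_on \<Omega>)
                     + (\<integral>\<^sup>+z. ennreal ((Im (\<omega> k z))\<^sup>2 * \<eta> z) \<partial>lebesgue_on \<Omega>))"
    by (rule nn_integral_form_sq_mult[OF measurable assms(3)]) (use assms(4) in simp)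
  also have "\<dots> \<le> (\<Sum>k\<in>UNIV. (\<integral>\<^sup>+z. ennreal (grad_sq (\<lambda>x. Re (\<omega> k x)) z) \<partial>lebesgue_on \<Omega>)
                     + (\<integral>\<^sup>+z. ennreal (grad_sq (\<lambda>x. Im (\<omega> k x)) z) \<partial>lebesgue_on \<Omega>))"
    by (intro sum_mono add_mono assms(5)[rule_format] test_function_compose_bounded_linear[OF _ tf]
        bounded_linear_Re bounded_linear_Im)
  also have "\<dots> = 4 * (\<integral>\<^sup>+ z. ennreal (dbar_sq \<omega> z) \<partial>(lebesgue_on \<Omega>))
      + 4 * (\<integral>\<^sup>+ z. ennreal ((cmod (dbar_star \<omega> z))\<^sup>2) \<partial>(lebesgue_on \<Omega>))"
    by (rule nn_integral_sum_grad_sq_Re_Im[OF \<Omega> K smooth \<omega>0])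
  finally show ?thesis .
qed

end
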